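(* Let $p,q\ge2$ be coprime, $f=x^p+y^q$, $G=\mathbb{Z}/pq\mathbb{Z}=\langle\Lambda\rangle$ with $\rho(\Lambda)=\mathrm{diag}(e^{2\pi i/p},e^{2\pi i/q})$, $j=\Lambda$, and $\sigma\equiv0$. Then the $\check\varphi$-invariant subspace of $\check{GM_f}$ has dimension $(p-1)(q-1)$ and is spanned by the elements $\check1_{\Lambda^i}$, $i\in\{0,\dots,pq-1\}$, with $i-1\not\equiv0\pmod p$ and $i-1\not\equiv0\pmod q$. For such $i$ write $i\equiv u\pmod p$ with $u\in\{2,\dots,p\}$ and $i\equiv v\pmod q$ with $v\in\{2,\dots,q\}$; then the map $\check1_{\Lambda^i}\mapsto x^{p-u}y^{q-v}$ is a bijection onto the monomial basis $\{x^ay^b:0\le a\le p-2,\ 0\le b\le q-2\}$ of $M_f$, and the dual bi-degree of $\check 1_{\Lambda^i}$ is $(-\deg(x^{p-u}y^{q-v}),\ \deg(x^{p-u}y^{q-v}))$ with $\deg x=\frac1p$, $\deg y=\frac1q$. In particular the invariants of the dual are isomorphic as a bi-graded vector space to the $(a,c)$ realization of $M_f$ (for $(p,q)=(3,4)$ this is $E_6$, for $(3,5)$ it is $E_8$).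
   Context: Standing setup. For quasi-homogeneous $f$ with weights $q_i\in(0,1)$, $d=\sum_i(1-2q_i)$, a finite abelian group $G$ acting diagonally via $\rho$ leaving $f$ invariant, $\rho(g)=\mathrm{diag}(e^{2\pi i\nu_i(g)})$, $\nu_i(g)\in[0,1)$: $\mathrm{Fix}(g)$ is spanned by the coordinates with $\nu_i(g)=0$, $A_g=M_{f|_{\mathrm{Fix}(g)}}$ ($=\mathbb{C}$ if $\mathrm{Fix}(g)=0$) with elements $a1_g$; for $\sigma\in\mathrm{Hom}(G,\mathbb{Z}/2\mathbb{Z})$, $\varphi(h)(a1_g)=(-1)^{\sigma(h)\sigma(g)}\det(\rho(h))^{-1}\det(\rho(h)|_{\mathrm{Fix}(g)})\,a(\rho(h)z)\,1_g$, $\chi(h)=(-1)^{\sigma(h)}\det\rho(h)$. Let $j\in G$ satisfy $\rho(j)=\mathrm{diag}(e^{2\pi iq_i})$. Dual: $\check A_g:=A_{gj^{-1}}$; $a\check1_g$ denotes $a1_{gj^{-1}}$ viewed in $\check A_g$; $\check\varphi(h)(a\check1_g)=\chi(h)\varphi(h)(a1_{gj^{-1}})$ viewed in $\check A_g$. Shifts $s_g=\sum_{i:\nu_i(g)\ne0}(\nu_i(g)-q_i)$, $\bar s_g=\sum_{i:\nu_i(g)\ne0}(1-\nu_i(g)-q_i)$; the dual bi-degree of $a\check1_g$ is $(\deg a+s_{gj^{-1}}-d,\ \deg a+\bar s_{gj^{-1}})$. *)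

theory Defs
  imports "HOL-Analysis.Analysis" "HOL-Library.Poly_Mapping"
begin

type_synonym mono = "nat \<Rightarrow>\<^sub>0 nat"
type_synonym mpoly = "mono \<Rightarrow>\<^sub>0 complex"

definition const :: "complex \<Rightarrow> mpoly" where
  "const c = Poly_Mapping.single 0 c"

definition var :: "nat \<Rightarrow> mpoly" where
  "var i = Poly_Mapping.single (Poly_Mapping.single i 1) 1"

definition polys_in :: "nat set \<Rightarrow> mpoly set" where
  "polys_in S = {a. \<forall>\<alpha>\<in>Poly_Mapping.keys a. Poly_Mapping.keys \<alpha> \<subseteq> S}"

text \<open>Restriction of a polynomial to the coordinate subspace spanned by S
  (the other variables are set to 0).\<close>
definition restr :: "nat set \<Rightarrow> mpoly \<Rightarrow> mpoly" where
  "restr S F = (\<Sum>\<alpha>\<in>{\<alpha>\<in>Poly_Mapping.keys F. Poly_Mapping.keys \<alpha> \<subseteq> S}. Poly_Mapping.single \<alpha> (Poly_Mapping.lookup F \<alpha>))"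

definition pd :: "nat \<Rightarrow> mpoly \<Rightarrow> mpoly" where
  "pd i F = (\<Sum>\<alpha>\<in>Poly_Mapping.keys F.
      Poly_Mapping.single (\<alpha> - Poly_Mapping.single i 1) (of_nat (Poly_Mapping.lookup \<alpha> i) * Poly_Mapping.lookup F \<alpha>))"

definition jac :: "nat set \<Rightarrow> mpoly \<Rightarrow> mpoly set" where
  "jac S F = {(\<Sum>i\<in>S. g i * pd i F) | g. \<forall>i\<in>S. g i \<in> polys_in S}"

text \<open>Equality in the Milnor ring of F restricted to the variables S:
  M_{F|S} = C[z_i : i in S] / (d_i (F|S) : i in S).  (For S empty this is C.)\<close>
definition milnor_eq :: "nat set \<Rightarrow> mpoly \<Rightarrow> mpoly \<Rightarrow> mpoly \<Rightarrow> bool" where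
  "milnor_eq S F a b \<longleftrightarrow> a - b \<in> jac S (restr S F)"

definition diag_subst :: "(nat \<Rightarrow> complex) \<Rightarrow> mpoly \<Rightarrow> mpoly" where
  "diag_subst c a = (\<Sum>\<alpha>\<in>Poly_Mapping.keys a.
      Poly_Mapping.single \<alpha> ((\<Prod>i\<in>Poly_Mapping.keys \<alpha>. c i ^ Poly_Mapping.lookup \<alpha> i) * Poly_Mapping.lookup a \<alpha>))"

definition wdeg :: "(nat \<Rightarrow> real) \<Rightarrow> mono \<Rightarrow> real" where
  "wdeg qw \<alpha> = (\<Sum>i\<in>Poly_Mapping.keys \<alpha>. real (Poly_Mapping.lookup \<alpha> i) * qw i)"

text \<open>n variables; group elements of type 'g; nu g i in [0,1) with
  rho(g) = diag(exp(2 pi i nu_i(g))); sg g in {0,1} represents a homomorphism to Z/2.\<close>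

definition lam :: "('g \<Rightarrow> nat \<Rightarrow> real) \<Rightarrow> 'g \<Rightarrow> nat \<Rightarrow> complex" where
  "lam nu h i = cis (2 * pi * nu h i)"

definition fixset :: "nat \<Rightarrow> ('g \<Rightarrow> nat \<Rightarrow> real) \<Rightarrow> 'g \<Rightarrow> nat set" where
  "fixset n nu g = {i. i < n \<and> nu g i = 0}"

definition detr :: "nat \<Rightarrow> ('g \<Rightarrow> nat \<Rightarrow> real) \<Rightarrow> 'g \<Rightarrow> complex" where
  "detr n nu h = (\<Prod>i<n. lam nu h i)"

definition detr_fix :: "nat \<Rightarrow> ('g \<Rightarrow> nat \<Rightarrow> real) \<Rightarrow> 'g \<Rightarrow> 'g \<Rightarrow> complex" where
  "detr_fix n nu h g = (\<Prod>i\<in>fixset n nu g. lam nu h i)"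

text \<open>phi(h)(a 1_g), returned as the polynomial coefficient of 1_g.\<close>
definition phi :: "nat \<Rightarrow> ('g \<Rightarrow> nat \<Rightarrow> real) \<Rightarrow> ('g \<Rightarrow> nat) \<Rightarrow> 'g \<Rightarrow> 'g \<Rightarrow> mpoly \<Rightarrow> mpoly" where
  "phi n nu sg h g a =
     const ((-1) ^ (sg h * sg g) * inverse (detr n nu h) * detr_fix n nu h g)
       * diag_subst (lam nu h) a"

definition chi :: "nat \<Rightarrow> ('g \<Rightarrow> nat \<Rightarrow> real) \<Rightarrow> ('g \<Rightarrow> nat) \<Rightarrow> 'g \<Rightarrow> complex" where
  "chi n nu sg h = (-1) ^ sg h * detr n nu h"

text \<open>G is the set of group elements, jinv g = g j^{-1}.  An element of the dual
  space is a family w with w g in A_{g j^{-1}} (a polynomial in the variables of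
  Fix(g j^{-1}), read modulo the Jacobian ideal); w g is the coefficient of the
  dual unit of g.\<close>

definition dual_space :: "nat \<Rightarrow> ('g \<Rightarrow> nat \<Rightarrow> real) \<Rightarrow> ('g \<Rightarrow> 'g) \<Rightarrow> 'g set \<Rightarrow> ('g \<Rightarrow> mpoly) set" where
  "dual_space n nu jinv G =
     {w. (\<forall>g\<in>G. w g \<in> polys_in (fixset n nu (jinv g))) \<and> (\<forall>g. g \<notin> G \<longrightarrow> w g = 0)}"

definition dual_equiv :: "nat \<Rightarrow> ('g \<Rightarrow> nat \<Rightarrow> real) \<Rightarrow> ('g \<Rightarrow> 'g) \<Rightarrow> 'g set \<Rightarrow> mpoly
     \<Rightarrow> ('g \<Rightarrow> mpoly) \<Rightarrow> ('g \<Rightarrow> mpoly) \<Rightarrow> bool" where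
  "dual_equiv n nu jinv G F w w' \<longleftrightarrow>
     (\<forall>g\<in>G. milnor_eq (fixset n nu (jinv g)) F (w g) (w' g))"

text \<open>The dual action: phi-check(h)(a 1-check_g) = chi(h) phi(h)(a 1_{g j^{-1}}).\<close>
definition dual_act :: "nat \<Rightarrow> ('g \<Rightarrow> nat \<Rightarrow> real) \<Rightarrow> ('g \<Rightarrow> nat) \<Rightarrow> ('g \<Rightarrow> 'g) \<Rightarrow> 'g set
     \<Rightarrow> 'g \<Rightarrow> ('g \<Rightarrow> mpoly) \<Rightarrow> ('g \<Rightarrow> mpoly)" where
  "dual_act n nu sg jinv G h w =
     (\<lambda>g. if g \<in> G then const (chi n nu sg h) * phi n nu sg h (jinv g) (w g) else 0)"

definition dual_invariant :: "nat \<Rightarrow> ('g \<Rightarrow> nat \<Rightarrow> real) \<Rightarrow> ('g \<Rightarrow> nat) \<Rightarrow> ('g \<Rightarrow> 'g) \<Rightarrow> 'g set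
     \<Rightarrow> mpoly \<Rightarrow> ('g \<Rightarrow> mpoly) \<Rightarrow> bool" where
  "dual_invariant n nu sg jinv G F w \<longleftrightarrow>
     w \<in> dual_space n nu jinv G \<and>
     (\<forall>h\<in>G. dual_equiv n nu jinv G F (dual_act n nu sg jinv G h w) w)"

text \<open>The element 1-check_{g0} (i.e. 1_{g0 j^{-1}} viewed in the dual).\<close>
definition dual_unit :: "'g \<Rightarrow> ('g \<Rightarrow> mpoly)" where
  "dual_unit g0 = (\<lambda>g. if g = g0 then 1 else 0)"

definition shift :: "nat \<Rightarrow> (nat \<Rightarrow> real) \<Rightarrow> ('g \<Rightarrow> nat \<Rightarrow> real) \<Rightarrow> 'g \<Rightarrow> real" where
  "shift n qw nu g = (\<Sum>i\<in>{i. i < n \<and> nu g i \<noteq> 0}. nu g i - qw i)"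

definition shiftbar :: "nat \<Rightarrow> (nat \<Rightarrow> real) \<Rightarrow> ('g \<Rightarrow> nat \<Rightarrow> real) \<Rightarrow> 'g \<Rightarrow> real" where
  "shiftbar n qw nu g = (\<Sum>i\<in>{i. i < n \<and> nu g i \<noteq> 0}. 1 - nu g i - qw i)"

definition cdim :: "nat \<Rightarrow> (nat \<Rightarrow> real) \<Rightarrow> real" where
  "cdim n qw = (\<Sum>i<n. 1 - 2 * qw i)"

definition dual_bideg :: "nat \<Rightarrow> (nat \<Rightarrow> real) \<Rightarrow> ('g \<Rightarrow> nat \<Rightarrow> real) \<Rightarrow> ('g \<Rightarrow> 'g)
     \<Rightarrow> mono \<Rightarrow> 'g \<Rightarrow> real \<times> real" where
  "dual_bideg n qw nu jinv \<alpha> g =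
     (wdeg qw \<alpha> + shift n qw nu (jinv g) - cdim n qw, wdeg qw \<alpha> + shiftbar n qw nu (jinv g))"

text \<open>x = variable 0, y = variable 1.  Group element Lambda^k is represented by
  k in {0..<p*q}; rho(Lambda^k) = diag(exp(2 pi i k/p), exp(2 pi i k/q)).\<close>

definition fpq :: "nat \<Rightarrow> nat \<Rightarrow> mpoly" where
  "fpq p q = var 0 ^ p + var 1 ^ q"

definition qwpq :: "nat \<Rightarrow> nat \<Rightarrow> nat \<Rightarrow> real" where
  "qwpq p q i = (if i = 0 then 1 / real p else if i = 1 then 1 / real q else 0)"

definition nupq :: "nat \<Rightarrow> nat \<Rightarrow> nat \<Rightarrow> nat \<Rightarrow> real" where
  "nupq p q k i = (if i = 0 then real (k mod p) / real p
                   else if i = 1 then real (k mod q) / real q else 0)"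

text \<open>j = Lambda, so g j^{-1} for g = Lambda^k is Lambda^(k-1 mod pq).\<close>
definition jinvpq :: "nat \<Rightarrow> nat \<Rightarrow> nat \<Rightarrow> nat" where
  "jinvpq p q k = (k + p * q - 1) mod (p * q)"

definition monexp :: "nat \<Rightarrow> nat \<Rightarrow> mono" where
  "monexp a b = Poly_Mapping.single 0 a + Poly_Mapping.single 1 b"

definition mon :: "nat \<Rightarrow> nat \<Rightarrow> mpoly" where
  "mon a b = Poly_Mapping.single (monexp a b) 1"

definition rep2 :: "nat \<Rightarrow> nat \<Rightarrow> nat" where
  "rep2 m i = (THE u. u \<in> {2..m} \<and> i mod m = u mod m)"

end

theory Submission
  imports Defs "HOL-Number_Theory.Cong"
begin

(* The Jacobian ideal of a Brieskorn-Pham polynomial sum_k z_k^(e_k) is the monomial ideal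
   generated by the z_k^(e_k - 1).  Hence the monomials x^a y^b with a <= p - 2, b <= q - 2 form a
   basis of M_f, and in every sector the Milnor ring is spanned by the monomials outside that ideal.
   In a sector with Fix(g j^-1) nonzero, the generator Lambda multiplies such a monomial z^alpha by
   the root of unity prod_(k in Fix) exp(2 pi sqrt(-1) (alpha_k + 1) / e_k), which differs from 1
   because p and q are coprime; so these sectors contain no invariants.  The sectors with
   Fix(g j^-1) = 0 are one-dimensional, and there chi(h) cancels the factor det(rho(h))^-1 of phi(h),
   so 1-check_g is invariant.  They are the g = Lambda^i with i not congruent to 1 modulo p or q,
   which the Chinese remainder theorem puts in bijection with the pairs (u, v); the bidegrees then
   follow from the shifts by direct computation. *)

lemma lookup_sum_single:
  assumes "finite K"
  shows "Poly_Mapping.lookup (\<Sum>\<beta>\<in>K. Poly_Mapping.single \<beta> (f \<beta>)) \<alpha> = (if \<alpha> \<in> K then f \<alpha> else 0)"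
  using assms by (simp add: lookup_sum lookup_single when_def eq_commute)

lemma sum_single_lookup_keys:
  "(\<Sum>\<beta>\<in>Poly_Mapping.keys a. Poly_Mapping.single \<beta> (Poly_Mapping.lookup a \<beta>)) = a"
  by (rule poly_mapping_eqI) (simp add: lookup_sum_single in_keys_iff)

lemma lookup_const_mult: "Poly_Mapping.lookup (const c * a) \<alpha> = c * Poly_Mapping.lookup a \<alpha>"
  by (simp add: const_def mult_map_scale_conv_mult[symmetric] map.rep_eq when_def)

lemma const_mult_const: "const a * const b = const (a * b)"
  by (simp add: const_def mult_single)

lemma var_power: "var i ^ n = Poly_Mapping.single (Poly_Mapping.single i n) 1"
  by (induction n) (simp_all add: var_def mult_single single_add[symmetric] add.commute)

lemma lookup_diag_subst:
  "Poly_Mapping.lookup (diag_subst c a) \<alpha> =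
     (\<Prod>i\<in>Poly_Mapping.keys \<alpha>. c i ^ Poly_Mapping.lookup \<alpha> i) * Poly_Mapping.lookup a \<alpha>"
  by (simp add: diag_subst_def lookup_sum_single in_keys_iff)

lemma lookup_restr:
  "Poly_Mapping.lookup (restr S F) \<alpha> = (if Poly_Mapping.keys \<alpha> \<subseteq> S then Poly_Mapping.lookup F \<alpha> else 0)"
  by (auto simp: restr_def lookup_sum_single in_keys_iff)

lemma lookup_pd:
  "Poly_Mapping.lookup (pd i F) \<beta> =
     of_nat (Poly_Mapping.lookup \<beta> i + 1) * Poly_Mapping.lookup F (\<beta> + Poly_Mapping.single i 1)"
proof -
  let ?e = "Poly_Mapping.single i 1 :: mono"
  have "Poly_Mapping.lookup (pd i F) \<beta> =
      (\<Sum>\<alpha>\<in>Poly_Mapping.keys F. if \<alpha> = \<beta> + ?e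
         then of_nat (Poly_Mapping.lookup \<alpha> i) * Poly_Mapping.lookup F \<alpha> else 0)"
    unfolding pd_def lookup_sum
  proof (intro sum.cong refl)
    fix \<alpha> :: mono
    show "Poly_Mapping.lookup (Poly_Mapping.single (\<alpha> - ?e)
            (of_nat (Poly_Mapping.lookup \<alpha> i) * Poly_Mapping.lookup F \<alpha>)) \<beta> =
        (if \<alpha> = \<beta> + ?e then of_nat (Poly_Mapping.lookup \<alpha> i) * Poly_Mapping.lookup F \<alpha> else 0)"
    proof (cases "Poly_Mapping.lookup \<alpha> i = 0")
      case False
      then have "\<alpha> - ?e = \<beta> \<longleftrightarrow> \<alpha> = \<beta> + ?e"
        by (auto simp: poly_mapping_eq_iff fun_eq_iff lookup_minus lookup_add lookup_single when_def)
      then show ?thesis by (auto simp: lookup_single when_def)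
    qed (auto simp: lookup_single lookup_add)
  qed
  also have "\<dots> = of_nat (Poly_Mapping.lookup \<beta> i + 1) * Poly_Mapping.lookup F (\<beta> + ?e)"
    by (simp add: lookup_add in_keys_iff)
  finally show ?thesis .
qed

lemma diff_single_add_single:
  assumes "k \<le> Poly_Mapping.lookup \<alpha> i"
  shows "\<alpha> - Poly_Mapping.single i k + Poly_Mapping.single i k = (\<alpha> :: mono)"
  using assms by (auto simp: poly_mapping_eq_iff fun_eq_iff lookup_add lookup_minus lookup_single when_def)

section \<open>Jacobian ideals of Brieskorn--Pham polynomials\<close>

definition brieskorn_pham :: "(nat \<Rightarrow> nat) \<Rightarrow> nat set \<Rightarrow> mpoly" where
  "brieskorn_pham e S = (\<Sum>i\<in>S. var i ^ e i)"

lemma lookup_brieskorn_pham: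
  assumes "finite S"
  shows "Poly_Mapping.lookup (brieskorn_pham e S) \<alpha> =
           (\<Sum>i\<in>S. if \<alpha> = Poly_Mapping.single i (e i) then 1 else 0)"
  using assms by (simp add: brieskorn_pham_def var_power lookup_sum lookup_single when_def eq_commute)

lemma restr_brieskorn_pham:
  assumes "finite N" "S \<subseteq> N" "\<forall>i\<in>N. 0 < e i"
  shows "restr S (brieskorn_pham e N) = brieskorn_pham e S"
proof (rule poly_mapping_eqI)
  fix \<alpha>
  have "finite S" using assms(1,2) by (rule finite_subset[rotated])
  show "Poly_Mapping.lookup (restr S (brieskorn_pham e N)) \<alpha> = Poly_Mapping.lookup (brieskorn_pham e S) \<alpha>"
  proof (cases "Poly_Mapping.keys \<alpha> \<subseteq> S")
    case True
    then have "(\<Sum>i\<in>N. if \<alpha> = Poly_Mapping.single i (e i) then 1 else 0) =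
               (\<Sum>i\<in>S. if \<alpha> = Poly_Mapping.single i (e i) then 1 else (0::complex))"
      using assms by (intro sum.mono_neutral_right) auto
    then show ?thesis
      using True assms(1) \<open>finite S\<close> by (simp add: lookup_restr lookup_brieskorn_pham)
  next
    case False
    then have "(\<Sum>i\<in>S. if \<alpha> = Poly_Mapping.single i (e i) then 1 else (0::complex)) = 0"
      by (intro sum.neutral) (auto split: if_splits)
    then show ?thesis
      using False \<open>finite S\<close> by (simp add: lookup_restr lookup_brieskorn_pham)
  qed
qed

lemma pd_brieskorn_pham:
  assumes "finite S" "j \<in> S" "\<forall>i\<in>S. 0 < e i"
  shows "pd j (brieskorn_pham e S) =
           Poly_Mapping.single (Poly_Mapping.single j (e j - 1)) (of_nat (e j))"
proof (rule poly_mapping_eqI)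
  fix \<beta> :: mono
  have shifted: "\<beta> + Poly_Mapping.single j 1 = Poly_Mapping.single i (e i) \<longleftrightarrow>
                   i = j \<and> \<beta> = Poly_Mapping.single j (e j - 1)" if "i \<in> S" for i
    using assms(3) that
    by (auto simp: poly_mapping_eq_iff fun_eq_iff lookup_add lookup_single when_def split: if_splits)
  have "Poly_Mapping.lookup (brieskorn_pham e S) (\<beta> + Poly_Mapping.single j 1) =
          (\<Sum>i\<in>S. if i = j then (if \<beta> = Poly_Mapping.single j (e j - 1) then 1 else 0) else 0)"
    unfolding lookup_brieskorn_pham[OF assms(1)] using shifted by (intro sum.cong refl) presburger
  also have "\<dots> = (if \<beta> = Poly_Mapping.single j (e j - 1) then 1 else 0)"
    using assms(1,2) by simp
  finally have shifted_lookup: "Poly_Mapping.lookup (brieskorn_pham e S) (\<beta> + Poly_Mapping.single j 1) =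
                 (if \<beta> = Poly_Mapping.single j (e j - 1) then 1 else 0)" .
  show "Poly_Mapping.lookup (pd j (brieskorn_pham e S)) \<beta> =
      Poly_Mapping.lookup (Poly_Mapping.single (Poly_Mapping.single j (e j - 1)) (of_nat (e j))) \<beta>"
    unfolding lookup_pd shifted_lookup using assms(2,3) by (auto simp: lookup_single when_def)
qed

definition pure_power_ideal :: "(nat \<Rightarrow> nat) \<Rightarrow> nat set \<Rightarrow> mpoly set" where
  "pure_power_ideal k S =
     {x \<in> polys_in S. \<forall>\<alpha>\<in>Poly_Mapping.keys x. \<exists>i\<in>S. k i \<le> Poly_Mapping.lookup \<alpha> i}"

lemma sum_mult_pure_powers_in_pure_power_ideal:
  assumes "\<forall>i\<in>S. g i \<in> polys_in S"
  shows "(\<Sum>i\<in>S. g i * Poly_Mapping.single (Poly_Mapping.single i (k i)) (c i)) \<in> pure_power_ideal k S"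
proof -
  let ?x = "\<Sum>i\<in>S. g i * Poly_Mapping.single (Poly_Mapping.single i (k i)) (c i)"
  have "Poly_Mapping.keys \<alpha> \<subseteq> S \<and> (\<exists>i\<in>S. k i \<le> Poly_Mapping.lookup \<alpha> i)"
    if \<alpha>_key: "\<alpha> \<in> Poly_Mapping.keys ?x" for \<alpha>
  proof -
    obtain i where i: "i \<in> S"
      and "\<alpha> \<in> Poly_Mapping.keys (g i * Poly_Mapping.single (Poly_Mapping.single i (k i)) (c i))"
      using subsetD[OF keys_sum \<alpha>_key] by blast
    then obtain a where a: "a \<in> Poly_Mapping.keys (g i)" and \<alpha>: "\<alpha> = a + Poly_Mapping.single i (k i)"
      using keys_mult[of "g i" "Poly_Mapping.single (Poly_Mapping.single i (k i)) (c i)"]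
      by (auto split: if_splits)
    have "Poly_Mapping.keys \<alpha> \<subseteq> Poly_Mapping.keys a \<union> {i}"
      unfolding \<alpha> using keys_add[of a "Poly_Mapping.single i (k i)"] by (auto split: if_splits)
    moreover have "Poly_Mapping.keys a \<subseteq> S" using assms i a by (auto simp: polys_in_def)
    moreover have "k i \<le> Poly_Mapping.lookup \<alpha> i" by (simp add: \<alpha> lookup_add)
    ultimately show ?thesis using i by blast
  qed
  then show ?thesis unfolding pure_power_ideal_def polys_in_def by blast
qed

lemma pure_power_ideal_eq_sum_mult:
  assumes "finite S" "\<forall>i\<in>S. c i \<noteq> 0" "x \<in> pure_power_ideal k S"
  shows "\<exists>g. (\<forall>i\<in>S. g i \<in> polys_in S) \<and>
             x = (\<Sum>i\<in>S. g i * Poly_Mapping.single (Poly_Mapping.single i (k i)) (c i))"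
proof -
  let ?gen = "\<lambda>i. Poly_Mapping.single (Poly_Mapping.single i (k i)) (c i)"
  have witness: "\<forall>\<alpha>\<in>Poly_Mapping.keys x. \<exists>i. i \<in> S \<and> k i \<le> Poly_Mapping.lookup \<alpha> i"
    using assms(3) by (auto simp: pure_power_ideal_def)
  obtain \<iota> where
    \<iota>: "\<forall>\<alpha>\<in>Poly_Mapping.keys x. \<iota> \<alpha> \<in> S \<and> k (\<iota> \<alpha>) \<le> Poly_Mapping.lookup \<alpha> (\<iota> \<alpha>)"
    using bchoice[OF witness] by blast
  define fiber where "fiber i = {\<alpha> \<in> Poly_Mapping.keys x. \<iota> \<alpha> = i}" for i
  define g where "g i = (\<Sum>\<alpha>\<in>fiber i.
      Poly_Mapping.single (\<alpha> - Poly_Mapping.single i (k i)) (Poly_Mapping.lookup x \<alpha> / c i))" for i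
  have g_poly: "g i \<in> polys_in S" for i
  proof -
    have "Poly_Mapping.keys (\<alpha> - Poly_Mapping.single i (k i)) \<subseteq> S" if "\<alpha> \<in> fiber i" for \<alpha>
    proof -
      have "Poly_Mapping.keys (\<alpha> - Poly_Mapping.single i (k i)) \<subseteq> Poly_Mapping.keys \<alpha>"
        by (auto simp: in_keys_iff lookup_minus)
      moreover have "Poly_Mapping.keys \<alpha> \<subseteq> S"
        using that assms(3) by (auto simp: fiber_def pure_power_ideal_def polys_in_def)
      ultimately show ?thesis by blast
    qed
    moreover have "Poly_Mapping.keys (g i) \<subseteq> (\<lambda>\<alpha>. \<alpha> - Poly_Mapping.single i (k i)) ` fiber i"
      unfolding g_def using keys_sum by (fastforce split: if_splits)
    ultimately show ?thesis unfolding polys_in_def by blast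
  qed
  have fiber_sum: "g i * ?gen i = (\<Sum>\<alpha>\<in>fiber i. Poly_Mapping.single \<alpha> (Poly_Mapping.lookup x \<alpha>))"
    if "i \<in> S" for i
    unfolding g_def sum_distrib_right mult_single
  proof (intro sum.cong refl)
    fix \<alpha> assume "\<alpha> \<in> fiber i"
    then have "\<alpha> - Poly_Mapping.single i (k i) + Poly_Mapping.single i (k i) = \<alpha>"
      using \<iota> by (intro diff_single_add_single) (auto simp: fiber_def)
    then show "Poly_Mapping.single (\<alpha> - Poly_Mapping.single i (k i) + Poly_Mapping.single i (k i))
                 (Poly_Mapping.lookup x \<alpha> / c i * c i) = Poly_Mapping.single \<alpha> (Poly_Mapping.lookup x \<alpha>)"
      using assms(2) that by simp
  qed
  have "(\<Sum>i\<in>S. g i * ?gen i) =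
      (\<Sum>i\<in>S. \<Sum>\<alpha>\<in>fiber i. Poly_Mapping.single \<alpha> (Poly_Mapping.lookup x \<alpha>))"
    by (rule sum.cong[OF refl fiber_sum])
  also have "\<dots> = (\<Sum>\<alpha>\<in>Poly_Mapping.keys x. Poly_Mapping.single \<alpha> (Poly_Mapping.lookup x \<alpha>))"
    unfolding fiber_def using \<iota> by (intro sum.group[OF finite_keys assms(1)]) blast
  also have "\<dots> = x" by (rule sum_single_lookup_keys)
  finally show ?thesis using g_poly by (intro exI[of _ g]) simp
qed

lemma jac_brieskorn_pham:
  assumes "finite S" "\<forall>i\<in>S. 0 < e i"
  shows "jac S (brieskorn_pham e S) = pure_power_ideal (\<lambda>i. e i - 1) S"
proof -
  let ?gen = "\<lambda>i. Poly_Mapping.single (Poly_Mapping.single i (e i - 1)) (of_nat (e i) :: complex)"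
  have "(\<Sum>i\<in>S. g i * pd i (brieskorn_pham e S)) = (\<Sum>i\<in>S. g i * ?gen i)" for g
    using assms by (intro sum.cong refl) (simp add: pd_brieskorn_pham)
  then have jac_eq: "jac S (brieskorn_pham e S) = {\<Sum>i\<in>S. g i * ?gen i | g. \<forall>i\<in>S. g i \<in> polys_in S}"
    unfolding jac_def by simp
  show ?thesis
  proof (intro equalityI subsetI)
    fix x assume "x \<in> jac S (brieskorn_pham e S)"
    then obtain g where "\<forall>i\<in>S. g i \<in> polys_in S" "x = (\<Sum>i\<in>S. g i * ?gen i)"
      unfolding jac_eq by blast
    then show "x \<in> pure_power_ideal (\<lambda>i. e i - 1) S"
      using sum_mult_pure_powers_in_pure_power_ideal by simp
  next
    fix x assume x: "x \<in> pure_power_ideal (\<lambda>i. e i - 1) S"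
    have "\<forall>i\<in>S. (of_nat (e i) :: complex) \<noteq> 0" using assms(2) by simp
    from pure_power_ideal_eq_sum_mult[OF assms(1) this x]
    show "x \<in> jac S (brieskorn_pham e S)" unfolding jac_eq by (simp add: conj_commute)
  qed
qed

lemma in_pure_power_ideal_if_diagonal_fixed:
  assumes "a \<in> polys_in S"
    and eigen: "\<And>\<alpha>. Poly_Mapping.lookup b \<alpha> = \<mu> \<alpha> * Poly_Mapping.lookup a \<alpha>"
    and fixed: "b - a \<in> pure_power_ideal k S"
    and eigen_ne_1: "\<And>\<alpha>. Poly_Mapping.keys \<alpha> \<subseteq> S \<Longrightarrow> \<forall>i\<in>S. Poly_Mapping.lookup \<alpha> i < k i \<Longrightarrow>
                       \<mu> \<alpha> \<noteq> 1"
  shows "a \<in> pure_power_ideal k S"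
proof -
  have "\<exists>i\<in>S. k i \<le> Poly_Mapping.lookup \<alpha> i" if \<alpha>: "\<alpha> \<in> Poly_Mapping.keys a" for \<alpha>
  proof (rule ccontr)
    assume "\<not> (\<exists>i\<in>S. k i \<le> Poly_Mapping.lookup \<alpha> i)"
    then have "\<forall>i\<in>S. Poly_Mapping.lookup \<alpha> i < k i" by auto
    moreover have "Poly_Mapping.keys \<alpha> \<subseteq> S" using assms(1) \<alpha> by (auto simp: polys_in_def)
    ultimately have "\<alpha> \<in> Poly_Mapping.keys (b - a)"
      using eigen_ne_1 \<alpha> by (simp add: lookup_minus eigen in_keys_iff left_diff_distrib[symmetric])
    then obtain i where "i \<in> S" "k i \<le> Poly_Mapping.lookup \<alpha> i"
      using fixed by (auto simp: pure_power_ideal_def)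
    then show False using \<open>\<forall>i\<in>S. Poly_Mapping.lookup \<alpha> i < k i\<close> by fastforce
  qed
  then show ?thesis using assms(1) by (simp add: pure_power_ideal_def)
qed

section \<open>The Milnor ring of x^p + y^q\<close>

definition pq_exponent :: "nat \<Rightarrow> nat \<Rightarrow> nat \<Rightarrow> nat" where
  "pq_exponent p q i = (if i = 0 then p else q)"

lemma milnor_eq_fpq_iff:
  assumes "1 \<le> p" "1 \<le> q" "S \<subseteq> {..<2}"
  shows "milnor_eq S (fpq p q) a b \<longleftrightarrow> a - b \<in> pure_power_ideal (\<lambda>i. pq_exponent p q i - 1) S"
proof -
  have "fpq p q = brieskorn_pham (pq_exponent p q) {..<2}"
    by (simp add: fpq_def brieskorn_pham_def pq_exponent_def numeral_2_eq_2)
  moreover have "finite S" using assms(3) by (rule finite_subset) simp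
  ultimately show ?thesis
    using assms by (simp add: milnor_eq_def restr_brieskorn_pham jac_brieskorn_pham pq_exponent_def)
qed

lemma lookup_monexp:
  "Poly_Mapping.lookup (monexp a b) i = (if i = 0 then a else if i = 1 then b else 0)"
  by (simp add: monexp_def lookup_add lookup_single when_def)

lemma monexp_eq_iff:
  "monexp a b = \<alpha> \<longleftrightarrow>
     Poly_Mapping.keys \<alpha> \<subseteq> {0, 1} \<and> Poly_Mapping.lookup \<alpha> 0 = a \<and> Poly_Mapping.lookup \<alpha> 1 = b"
proof
  assume "monexp a b = \<alpha>"
  then show "Poly_Mapping.keys \<alpha> \<subseteq> {0, 1} \<and> Poly_Mapping.lookup \<alpha> 0 = a \<and> Poly_Mapping.lookup \<alpha> 1 = b"
    by (auto simp: in_keys_iff lookup_monexp split: if_splits)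
next
  assume \<alpha>: "Poly_Mapping.keys \<alpha> \<subseteq> {0, 1} \<and> Poly_Mapping.lookup \<alpha> 0 = a \<and> Poly_Mapping.lookup \<alpha> 1 = b"
  show "monexp a b = \<alpha>"
  proof (rule poly_mapping_eqI)
    fix i
    show "Poly_Mapping.lookup (monexp a b) i = Poly_Mapping.lookup \<alpha> i"
      using \<alpha> by (cases "i \<in> {0, 1}") (auto simp: lookup_monexp in_keys_iff)
  qed
qed

lemma lookup_sum_mon:
  assumes "finite B"
  shows "Poly_Mapping.lookup (\<Sum>(a, b)\<in>B. const (c (a, b)) * mon a b) \<alpha> =
    (if Poly_Mapping.keys \<alpha> \<subseteq> {0, 1} \<and> (Poly_Mapping.lookup \<alpha> 0, Poly_Mapping.lookup \<alpha> 1) \<in> B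
     then c (Poly_Mapping.lookup \<alpha> 0, Poly_Mapping.lookup \<alpha> 1) else 0)"
proof -
  have "Poly_Mapping.lookup (\<Sum>(a, b)\<in>B. const (c (a, b)) * mon a b) \<alpha> =
      (\<Sum>ab\<in>B. if monexp (fst ab) (snd ab) = \<alpha> then c ab else 0)"
    unfolding lookup_sum
    by (intro sum.cong refl) (auto simp: const_def mon_def mult_single lookup_single when_def)
  also have "\<dots> = (\<Sum>ab\<in>B. if Poly_Mapping.keys \<alpha> \<subseteq> {0, 1} \<and>
                      ab = (Poly_Mapping.lookup \<alpha> 0, Poly_Mapping.lookup \<alpha> 1) then c ab else 0)"
    by (intro sum.cong refl) (auto simp: monexp_eq_iff)
  finally show ?thesis
    using assms by (cases "Poly_Mapping.keys \<alpha> \<subseteq> {0, 1}") (simp_all add: sum.delta')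
qed

lemma pairs_le_eq_atMost_times: "{(a, b). a \<le> (m :: nat) \<and> b \<le> (n :: nat)} = {..m} \<times> {..n}"
  by auto

lemma finite_pairs_le: "finite {(a, b). a \<le> (m :: nat) \<and> b \<le> (n :: nat)}"
  by (simp add: pairs_le_eq_atMost_times)

lemma card_pairs_le: "card {(a, b). a \<le> (m :: nat) \<and> b \<le> (n :: nat)} = Suc m * Suc n"
  by (simp add: pairs_le_eq_atMost_times card_cartesian_product)

lemma milnor_fpq_monomials_independent:
  assumes "2 \<le> p" "2 \<le> q"
    and zero: "milnor_eq {..<2} (fpq p q)
       (\<Sum>(a, b)\<in>{(a, b). a \<le> p - 2 \<and> b \<le> q - 2}. const (c (a, b)) * mon a b) 0"
    and "ab \<in> {(a, b). a \<le> p - 2 \<and> b \<le> q - 2}"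
  shows "c ab = 0"
proof (rule ccontr)
  let ?X = "\<Sum>(a, b)\<in>{(a, b). a \<le> p - 2 \<and> b \<le> q - 2}. const (c (a, b)) * mon a b"
  obtain a b where ab: "ab = (a, b)" "a \<le> p - 2" "b \<le> q - 2" using assms(4) by auto
  assume "c ab \<noteq> 0"
  then have "monexp a b \<in> Poly_Mapping.keys ?X"
    using ab monexp_eq_iff[of a b "monexp a b"]
    by (simp add: in_keys_iff lookup_sum_mon finite_pairs_le)
  moreover have "?X \<in> pure_power_ideal (\<lambda>i. pq_exponent p q i - 1) {..<2}"
    using zero assms(1,2) milnor_eq_fpq_iff[of p q "{..<2}"] by simp
  ultimately obtain i where "i < 2" "pq_exponent p q i - 1 \<le> Poly_Mapping.lookup (monexp a b) i"
    by (auto simp: pure_power_ideal_def)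
  then show False using ab assms(1,2) by (auto simp: pq_exponent_def lookup_monexp less_2_cases_iff)
qed

lemma milnor_fpq_monomials_span:
  assumes "2 \<le> p" "2 \<le> q" "x \<in> polys_in {..<2}"
  shows "\<exists>c. milnor_eq {..<2} (fpq p q) x
           (\<Sum>(a, b)\<in>{(a, b). a \<le> p - 2 \<and> b \<le> q - 2}. const (c (a, b)) * mon a b)"
proof -
  define B where "B = {(a, b). a \<le> p - 2 \<and> b \<le> q - 2}"
  have "finite B" unfolding B_def by (rule finite_pairs_le)
  define c where "c ab = Poly_Mapping.lookup x (monexp (fst ab) (snd ab))" for ab
  let ?X = "\<Sum>(a, b)\<in>B. const (c (a, b)) * mon a b"
  have lookup_rest: "Poly_Mapping.lookup (x - ?X) \<alpha> =
      Poly_Mapping.lookup x \<alpha> -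
      (if Poly_Mapping.keys \<alpha> \<subseteq> {0, 1} \<and> (Poly_Mapping.lookup \<alpha> 0, Poly_Mapping.lookup \<alpha> 1) \<in> B
       then Poly_Mapping.lookup x \<alpha> else 0)" for \<alpha>
    unfolding lookup_minus lookup_sum_mon[OF \<open>finite B\<close>]
    using monexp_eq_iff[of "Poly_Mapping.lookup \<alpha> 0" "Poly_Mapping.lookup \<alpha> 1" \<alpha>] by (auto simp: c_def)
  have "Poly_Mapping.keys \<alpha> \<subseteq> {..<2} \<and> (\<exists>i<2. pq_exponent p q i - 1 \<le> Poly_Mapping.lookup \<alpha> i)"
    if "\<alpha> \<in> Poly_Mapping.keys (x - ?X)" for \<alpha>
  proof -
    have "\<alpha> \<in> Poly_Mapping.keys x" "Poly_Mapping.lookup (x - ?X) \<alpha> \<noteq> 0"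
      using that unfolding in_keys_iff lookup_rest by (auto split: if_splits)
    then have "Poly_Mapping.keys \<alpha> \<subseteq> {..<2}" "(Poly_Mapping.lookup \<alpha> 0, Poly_Mapping.lookup \<alpha> 1) \<notin> B"
      using assms(3) unfolding lookup_rest by (auto simp: polys_in_def lessThan_nat_numeral split: if_splits)
    then show ?thesis using assms(1,2) by (auto simp: B_def pq_exponent_def)
  qed
  then have "x - ?X \<in> pure_power_ideal (\<lambda>i. pq_exponent p q i - 1) {..<2}"
    by (auto simp: pure_power_ideal_def polys_in_def)
  then show ?thesis unfolding B_def using milnor_eq_fpq_iff[of p q "{..<2}"] assms(1,2) by auto
qed

section \<open>The sectors of the dual state space\<close>

lemma int_dvd_diff_one_iff:
  assumes "2 \<le> m"
  shows "int m dvd (int i - 1) \<longleftrightarrow> i mod m = 1"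
proof -
  have "int m dvd (int i - 1) \<longleftrightarrow> int i mod int m = 1 mod int m"
    by (simp add: mod_eq_dvd_iff)
  also have "1 mod int m = 1" using assms by simp
  also have "int i mod int m = int (i mod m)" by (simp add: zmod_int)
  finally show ?thesis by simp
qed

lemma rep2_eqI:
  assumes "u \<in> {2..m}" "u mod m = i mod m"
  shows "rep2 m i = u"
  unfolding rep2_def
proof (rule the_equality)
  show "u \<in> {2..m} \<and> i mod m = u mod m" using assms by simp
next
  fix v assume v: "v \<in> {2..m} \<and> i mod m = v mod m"
  then show "v = u" using assms by (cases "u = m"; cases "v = m") auto
qed

lemma
  assumes "2 \<le> m" "i mod m \<noteq> 1"
  shows rep2_range: "rep2 m i \<in> {2..m}" and rep2_mod: "rep2 m i mod m = i mod m"
proof -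
  let ?u = "if i mod m = 0 then m else i mod m"
  have "?u \<in> {2..m}" "?u mod m = i mod m"
    using assms mod_less_divisor[of m i] by auto
  then show "rep2 m i \<in> {2..m}" "rep2 m i mod m = i mod m"
    using rep2_eqI by auto
qed

lemma jinvpq_commute: "jinvpq p q = jinvpq q p"
  by (simp add: jinvpq_def mult.commute fun_eq_iff)

lemma Suc_jinvpq_mod:
  assumes "0 < p" "0 < q"
  shows "Suc (jinvpq p q i) mod p = i mod p"
proof -
  have "(i + p * q - 1) mod (p * q) mod p = (i + p * q - 1) mod p" by (simp add: mod_mod_cancel)
  then have "Suc (jinvpq p q i) mod p = Suc (i + p * q - 1) mod p"
    unfolding jinvpq_def by (metis mod_Suc_eq)
  also have "\<dots> = (i + p * q) mod p" using assms by simp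
  finally show ?thesis by simp
qed

lemma jinvpq_mod_eq_0_iff:
  assumes "2 \<le> p" "0 < q"
  shows "jinvpq p q i mod p = 0 \<longleftrightarrow> i mod p = 1"
  using Suc_jinvpq_mod[of p q i] assms by (auto simp: mod_Suc split: if_splits)

lemma jinvpq_mod_rep2:
  assumes "2 \<le> p" "0 < q" "i mod p \<noteq> 1"
  shows "jinvpq p q i mod p = rep2 p i - 1"
proof -
  have "Suc (jinvpq p q i mod p) mod p = rep2 p i mod p"
    using Suc_jinvpq_mod[of p q i] rep2_mod[OF assms(1,3)] assms(1,2) by (simp add: mod_Suc_eq)
  then show ?thesis
    using rep2_range[OF assms(1,3)] assms(1)
    by (cases "rep2 p i = p") (auto simp: mod_Suc split: if_splits)
qed

definition narrow_sectors :: "nat \<Rightarrow> nat \<Rightarrow> nat set" where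
  "narrow_sectors p q = {i. i < p * q \<and> i mod p \<noteq> 1 \<and> i mod q \<noteq> 1}"

lemma fixset_jinvpq:
  assumes "2 \<le> p" "2 \<le> q"
  shows "fixset 2 (nupq p q) (jinvpq p q i) = {j. j = 0 \<and> i mod p = 1 \<or> j = 1 \<and> i mod q = 1}"
proof -
  have "nupq p q (jinvpq p q i) 0 = 0 \<longleftrightarrow> i mod p = 1"
    using jinvpq_mod_eq_0_iff[of p q i] assms by (simp add: nupq_def)
  moreover have "nupq p q (jinvpq p q i) 1 = 0 \<longleftrightarrow> i mod q = 1"
    using jinvpq_mod_eq_0_iff[of q p i] assms by (simp add: nupq_def jinvpq_commute)
  ultimately show ?thesis by (auto simp: fixset_def less_2_cases_iff)
qed

lemma fixset_jinvpq_eq_empty_iff: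
  assumes "2 \<le> p" "2 \<le> q" "i < p * q"
  shows "fixset 2 (nupq p q) (jinvpq p q i) = {} \<longleftrightarrow> i \<in> narrow_sectors p q"
  using assms by (auto simp: fixset_jinvpq narrow_sectors_def)

lemma bij_betw_narrow_sectors:
  assumes "2 \<le> p" "2 \<le> q" "coprime p q"
  shows "bij_betw (\<lambda>i. (p - rep2 p i, q - rep2 q i)) (narrow_sectors p q)
           {(a, b). a \<le> p - 2 \<and> b \<le> q - 2}"
proof (rule bij_betw_imageI)
  show "inj_on (\<lambda>i. (p - rep2 p i, q - rep2 q i)) (narrow_sectors p q)"
  proof (rule inj_onI)
    fix i j assume "i \<in> narrow_sectors p q" "j \<in> narrow_sectors p q"
      and eq: "(p - rep2 p i, q - rep2 q i) = (p - rep2 p j, q - rep2 q j)"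
    then have "i < p * q" "j < p * q" and ij: "i mod p \<noteq> 1" "i mod q \<noteq> 1" "j mod p \<noteq> 1" "j mod q \<noteq> 1"
      by (auto simp: narrow_sectors_def)
    have "rep2 p i = rep2 p j" "rep2 q i = rep2 q j"
      using eq rep2_range[OF assms(1) ij(1)] rep2_range[OF assms(1) ij(3)]
        rep2_range[OF assms(2) ij(2)] rep2_range[OF assms(2) ij(4)] by auto
    then have "i mod p = j mod p" "i mod q = j mod q"
      using rep2_mod[OF assms(1) ij(1)] rep2_mod[OF assms(1) ij(3)]
        rep2_mod[OF assms(2) ij(2)] rep2_mod[OF assms(2) ij(4)] by auto
    then show "i = j"
      using coprime_cong_mult_nat[OF _ _ assms(3), of i j] \<open>i < p * q\<close> \<open>j < p * q\<close>
      by (simp add: cong_def)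
  qed
next
  show "(\<lambda>i. (p - rep2 p i, q - rep2 q i)) ` narrow_sectors p q = {(a, b). a \<le> p - 2 \<and> b \<le> q - 2}"
  proof (intro equalityI subsetI)
    fix ab assume "ab \<in> (\<lambda>i. (p - rep2 p i, q - rep2 q i)) ` narrow_sectors p q"
    then obtain i where "ab = (p - rep2 p i, q - rep2 q i)" "i mod p \<noteq> 1" "i mod q \<noteq> 1"
      by (auto simp: narrow_sectors_def)
    then show "ab \<in> {(a, b). a \<le> p - 2 \<and> b \<le> q - 2}"
      using rep2_range[OF assms(1), of i] rep2_range[OF assms(2), of i] by auto
  next
    fix ab assume "ab \<in> {(a, b). a \<le> p - 2 \<and> b \<le> q - 2}"
    then obtain a b where ab: "ab = (a, b)" "p - a \<in> {2..p}" "q - b \<in> {2..q}"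
      using assms(1,2) by auto
    obtain i where i: "i < p * q" "[i = p - a] (mod p)" "[i = q - b] (mod q)"
      using binary_chinese_remainder_unique_nat[OF assms(3), of "p - a" "q - b"] assms(1,2) by auto
    have "u mod m \<noteq> 1" if "u \<in> {2..m}" for u m :: nat
      using that by (cases "u = m") auto
    then have "i \<in> narrow_sectors p q"
      using i ab by (auto simp: narrow_sectors_def cong_def)
    moreover have "rep2 p i = p - a" "rep2 q i = q - b"
      using i ab by (auto intro!: rep2_eqI simp: cong_def)
    ultimately show "ab \<in> (\<lambda>i. (p - rep2 p i, q - rep2 q i)) ` narrow_sectors p q"
      using ab assms(1,2) by (auto intro!: image_eqI[of _ _ i])
  qed
qed

lemma card_narrow_sectors:
  assumes "2 \<le> p" "2 \<le> q" "coprime p q"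
  shows "card (narrow_sectors p q) = (p - 1) * (q - 1)"
proof -
  have "Suc (p - 2) = p - 1" "Suc (q - 2) = q - 1" using assms(1,2) by arith+
  then show ?thesis
    using bij_betw_same_card[OF bij_betw_narrow_sectors[OF assms]] card_pairs_le by simp
qed

lemma wdeg_monexp: "wdeg qw (monexp a b) = real a * qw 0 + real b * qw 1"
proof -
  have "wdeg qw (monexp a b) = (\<Sum>i\<in>{0, 1}. real (Poly_Mapping.lookup (monexp a b) i) * qw i)"
    unfolding wdeg_def
    by (rule sum.mono_neutral_left) (use monexp_eq_iff[of a b "monexp a b"] in \<open>auto simp: in_keys_iff\<close>)
  then show ?thesis by (simp add: lookup_monexp)
qed

lemma dual_bideg_narrow:
  assumes "2 \<le> p" "2 \<le> q" "i \<in> narrow_sectors p q"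
  shows "dual_bideg 2 (qwpq p q) (nupq p q) (jinvpq p q) 0 i =
           (- wdeg (qwpq p q) (monexp (p - rep2 p i) (q - rep2 q i)),
            wdeg (qwpq p q) (monexp (p - rep2 p i) (q - rep2 q i)))"
proof -
  let ?k = "jinvpq p q i"
  define u v where "u = rep2 p i" and "v = rep2 q i"
  have "i mod p \<noteq> 1" "i mod q \<noteq> 1" using assms(3) by (auto simp: narrow_sectors_def)
  then have u: "2 \<le> u" "u \<le> p" "?k mod p = u - 1" and v: "2 \<le> v" "v \<le> q" "?k mod q = v - 1"
    using rep2_range jinvpq_mod_rep2 jinvpq_mod_rep2[of q p i] assms(1,2)
    by (auto simp: u_def v_def jinvpq_commute)
  have moving: "{j. j < 2 \<and> nupq p q ?k j \<noteq> 0} = {0, 1}"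
    using u v assms(1,2) by (auto simp: nupq_def less_2_cases_iff)
  have "wdeg (qwpq p q) 0 = 0" by (simp add: wdeg_def)
  moreover have "p > 0" "q > 0" using assms(1,2) by auto
  ultimately show ?thesis
    unfolding dual_bideg_def shift_def shiftbar_def cdim_def moving u_def[symmetric] v_def[symmetric]
    using u v
    by (simp add: nupq_def qwpq_def wdeg_monexp numeral_2_eq_2 of_nat_diff field_simps)
qed

section \<open>Invariants of the dual action\<close>

lemma diag_subst_0: "diag_subst c 0 = 0"
  by (simp add: diag_subst_def)

lemma diag_subst_1: "diag_subst c 1 = 1"
  by (simp add: diag_subst_def)

lemma detr_nonzero: "detr n nu h \<noteq> 0"
  by (simp add: detr_def lam_def)

lemma milnor_eq_empty_iff: "milnor_eq {} F a b \<longleftrightarrow> a = b"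
  by (simp add: milnor_eq_def jac_def)

lemma milnor_eq_refl: "milnor_eq S F a a"
  unfolding milnor_eq_def jac_def by (auto intro!: exI[of _ "\<lambda>_. 0"] simp: polys_in_def)

lemma polys_in_empty_eq_const:
  assumes "x \<in> polys_in {}"
  shows "x = const (Poly_Mapping.lookup x 0)"
proof (rule poly_mapping_eqI)
  fix \<alpha>
  show "Poly_Mapping.lookup x \<alpha> = Poly_Mapping.lookup (const (Poly_Mapping.lookup x 0)) \<alpha>"
    using assms by (cases "\<alpha> = 0") (auto simp: const_def lookup_single polys_in_def in_keys_iff)
qed

lemma dual_act_dual_unit_narrow:
  assumes "i \<in> G" "fixset n nu (jinv i) = {}"
  shows "dual_act n nu (\<lambda>_. 0) jinv G h (dual_unit i) = dual_unit i"
proof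
  fix g
  have "const (chi n nu (\<lambda>_. 0) h) * phi n nu (\<lambda>_. 0) h (jinv i) 1 = 1"
    using assms(2) detr_nonzero[of n nu h]
    by (simp add: phi_def chi_def detr_fix_def diag_subst_1 const_mult_const mult.assoc[symmetric])
       (simp add: const_def)
  then show "dual_act n nu (\<lambda>_. 0) jinv G h (dual_unit i) g = dual_unit i g"
    using assms(1) by (auto simp: dual_act_def dual_unit_def phi_def diag_subst_0)
qed

lemma dual_invariant_dual_unit:
  assumes "i \<in> G" "fixset n nu (jinv i) = {}"
  shows "dual_invariant n nu (\<lambda>_. 0) jinv G F (dual_unit i)"
  unfolding dual_invariant_def
proof
  show "dual_unit i \<in> dual_space n nu jinv G"
    using assms(1) by (auto simp: dual_space_def dual_unit_def polys_in_def)
  show "\<forall>h\<in>G. dual_equiv n nu jinv G F (dual_act n nu (\<lambda>_. 0) jinv G h (dual_unit i)) (dual_unit i)"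
    using dual_act_dual_unit_narrow[of i G n nu jinv] assms by (simp add: dual_equiv_def milnor_eq_refl)
qed

lemma sum_const_dual_unit:
  assumes "finite I"
  shows "(\<Sum>j\<in>I. const (c j) * dual_unit j g) = (if g \<in> I then const (c g) else 0)"
  using assms by (simp add: dual_unit_def if_distrib[of "(*) _"] sum.delta cong: if_cong)

lemma dual_units_independent:
  assumes "finite I" "I \<subseteq> G" "\<forall>i\<in>I. fixset n nu (jinv i) = {}"
    and "dual_equiv n nu jinv G F (\<lambda>g. \<Sum>i\<in>I. const (c i) * dual_unit i g) (\<lambda>_. 0)"
    and "i \<in> I"
  shows "c i = 0"
proof -
  have "milnor_eq (fixset n nu (jinv i)) F (\<Sum>j\<in>I. const (c j) * dual_unit j i) 0"
    using assms(2,4,5) unfolding dual_equiv_def by blast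
  then have "const (c i) = 0"
    using assms(1,3,5) by (simp add: sum_const_dual_unit milnor_eq_empty_iff)
  then show ?thesis by (metis const_def lookup_single_eq lookup_zero)
qed

lemma dual_invariant_in_span_dual_units:
  assumes "finite I" "I \<subseteq> G" "\<forall>g\<in>G. fixset n nu (jinv g) = {} \<longleftrightarrow> g \<in> I"
    and broad: "\<forall>g\<in>G - I. milnor_eq (fixset n nu (jinv g)) F (w g) 0"
    and "w \<in> dual_space n nu jinv G"
  shows "\<exists>c. dual_equiv n nu jinv G F w (\<lambda>g. \<Sum>i\<in>I. const (c i) * dual_unit i g)"
proof
  let ?c = "\<lambda>i. Poly_Mapping.lookup (w i) 0"
  show "dual_equiv n nu jinv G F w (\<lambda>g. \<Sum>i\<in>I. const (?c i) * dual_unit i g)"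
    unfolding dual_equiv_def
  proof
    fix g assume "g \<in> G"
    show "milnor_eq (fixset n nu (jinv g)) F (w g) (\<Sum>i\<in>I. const (?c i) * dual_unit i g)"
    proof (cases "g \<in> I")
      case True
      then have "fixset n nu (jinv g) = {}" using assms(3) \<open>g \<in> G\<close> by blast
      moreover have "w g \<in> polys_in (fixset n nu (jinv g))"
        using assms(5) \<open>g \<in> G\<close> by (auto simp: dual_space_def)
      ultimately have "w g \<in> polys_in {}" by simp
      then show ?thesis
        using True assms(1,3) \<open>g \<in> G\<close> polys_in_empty_eq_const
        by (simp add: sum_const_dual_unit milnor_eq_refl)
    next
      case False
      then show ?thesis using broad \<open>g \<in> G\<close> assms(1) by (simp add: sum_const_dual_unit)
    qed
  qed
qed

lemma lookup_dual_act_component: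
  "Poly_Mapping.lookup (const (chi n nu (\<lambda>_. 0) h) * phi n nu (\<lambda>_. 0) h k a) \<alpha> =
     detr_fix n nu h k * (\<Prod>i\<in>Poly_Mapping.keys \<alpha>. lam nu h i ^ Poly_Mapping.lookup \<alpha> i) *
     Poly_Mapping.lookup a \<alpha>"
  using detr_nonzero[of n nu h]
  by (simp add: phi_def chi_def mult.assoc[symmetric] const_mult_const lookup_const_mult lookup_diag_subst)

lemma cis_fractions_eq_1_imp:
  assumes "coprime p q" "a < p" "b < q"
    and "cis (real a * (2 * pi / real p)) * cis (real b * (2 * pi / real q)) = 1"
  shows "a = 0 \<and> b = 0"
proof -
  have "cos (real a * (2 * pi / real p) + real b * (2 * pi / real q)) = 1"
    using assms(4) by (simp add: cis_mult complex_eq_iff)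
  then obtain n :: int where "real a * (2 * pi / real p) + real b * (2 * pi / real q) = n * 2 * pi"
    by (auto simp: cos_one_2pi_int)
  then have "(2 * pi) * (real a * real q + real b * real p) = (2 * pi) * (n * real p * real q)"
    using assms(2,3) by (simp add: field_simps)
  then have "real a * real q + real b * real p = n * real p * real q"
    by (simp only: mult_cancel_left) simp
  then have int_eq: "int a * int q + int b * int p = n * int p * int q"
    by (metis (mono_tags) of_int_add of_int_mult of_int_of_nat_eq of_int_eq_iff)
  have "int (a * q) = int p * (n * int q - int b)" "int (b * p) = int q * (n * int p - int a)"
    using int_eq by (simp_all add: algebra_simps)
  then have "p dvd a * q" "q dvd b * p"
    by (metis dvdI of_nat_dvd_iff)+
  then have "p dvd a" "q dvd b"
    using assms(1) by (simp_all add: coprime_dvd_mult_left_iff coprime_commute)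
  then show ?thesis using assms(2,3) by (auto dest: dvd_imp_le)
qed

lemma generator_eigenvalue_ne_1:
  assumes "2 \<le> p" "2 \<le> q" "coprime p q"
    and S: "S = fixset 2 (nupq p q) k" "S \<noteq> {}"
    and "Poly_Mapping.keys \<alpha> \<subseteq> S" "\<forall>i\<in>S. Poly_Mapping.lookup \<alpha> i < pq_exponent p q i - 1"
  shows "detr_fix 2 (nupq p q) 1 k *
           (\<Prod>i\<in>Poly_Mapping.keys \<alpha>. lam (nupq p q) 1 i ^ Poly_Mapping.lookup \<alpha> i) \<noteq> 1"
proof -
  let ?\<zeta> = "lam (nupq p q) 1"
  define m where "m i = (if i \<in> S then Suc (Poly_Mapping.lookup \<alpha> i) else 0)" for i
  have "S \<subseteq> {0, 1}" using S(1) by (auto simp: fixset_def)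
  then have "finite S" by (rule finite_subset) simp
  have "detr_fix 2 (nupq p q) 1 k * (\<Prod>i\<in>Poly_Mapping.keys \<alpha>. ?\<zeta> i ^ Poly_Mapping.lookup \<alpha> i) =
      (\<Prod>i\<in>S. ?\<zeta> i) * (\<Prod>i\<in>S. ?\<zeta> i ^ Poly_Mapping.lookup \<alpha> i)"
    unfolding detr_fix_def S(1)[symmetric]
    using \<open>finite S\<close> assms(6) by (auto simp: in_keys_iff intro!: prod.mono_neutral_left)
  also have "\<dots> = (\<Prod>i\<in>S. ?\<zeta> i ^ m i)"
    by (auto simp: m_def prod.distrib[symmetric] intro!: prod.cong)
  also have "\<dots> = (\<Prod>i\<in>{0, 1}. ?\<zeta> i ^ m i)"
    using \<open>S \<subseteq> {0, 1}\<close> by (intro prod.mono_neutral_left) (auto simp: m_def)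
  also have "\<dots> = cis (real (m 0) * (2 * pi / real p)) * cis (real (m 1) * (2 * pi / real q))"
    using assms(1,2) by (simp add: lam_def nupq_def) (simp only: Complex.DeMoivre times_divide_eq_right)
  finally have eigenvalue: "detr_fix 2 (nupq p q) 1 k *
      (\<Prod>i\<in>Poly_Mapping.keys \<alpha>. ?\<zeta> i ^ Poly_Mapping.lookup \<alpha> i) =
      cis (real (m 0) * (2 * pi / real p)) * cis (real (m 1) * (2 * pi / real q))" .
  have "m 0 < p" "m 1 < q"
    using assms(1,2,7) by (auto simp: m_def pq_exponent_def)
  moreover have "m 0 \<noteq> 0 \<or> m 1 \<noteq> 0"
    using S(2) \<open>S \<subseteq> {0, 1}\<close> by (auto simp: m_def)
  ultimately show ?thesis
    unfolding eigenvalue using cis_fractions_eq_1_imp[OF assms(3)] by metis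
qed

lemma broad_sector_vanishes:
  assumes "2 \<le> p" "2 \<le> q" "coprime p q"
    and "g < p * q" "g \<notin> narrow_sectors p q"
    and inv: "dual_invariant 2 (nupq p q) (\<lambda>_. 0) (jinvpq p q) {..<p * q} (fpq p q) w"
  shows "milnor_eq (fixset 2 (nupq p q) (jinvpq p q g)) (fpq p q) (w g) 0"
proof -
  define S where "S = fixset 2 (nupq p q) (jinvpq p q g)"
  let ?e = "\<lambda>i. pq_exponent p q i - 1"
  have "S \<noteq> {}" "S \<subseteq> {..<2}"
    using fixset_jinvpq_eq_empty_iff[OF assms(1,2,4)] assms(5) by (auto simp: S_def fixset_def)
  have "1 \<in> {..<p * q}" using mult_le_mono[OF assms(1,2)] by simp
  then have "dual_equiv 2 (nupq p q) (jinvpq p q) {..<p * q} (fpq p q)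
      (dual_act 2 (nupq p q) (\<lambda>_. 0) (jinvpq p q) {..<p * q} 1 w) w"
    using inv unfolding dual_invariant_def by blast
  then have "milnor_eq S (fpq p q)
      (const (chi 2 (nupq p q) (\<lambda>_. 0) 1) * phi 2 (nupq p q) (\<lambda>_. 0) 1 (jinvpq p q g) (w g)) (w g)"
    using assms(4) unfolding dual_equiv_def dual_act_def S_def by simp
  then have fixed: "const (chi 2 (nupq p q) (\<lambda>_. 0) 1) * phi 2 (nupq p q) (\<lambda>_. 0) 1 (jinvpq p q g) (w g)
      - w g \<in> pure_power_ideal ?e S"
    using milnor_eq_fpq_iff \<open>S \<subseteq> {..<2}\<close> assms(1,2) by simp
  have "w g \<in> polys_in S"
    using inv assms(4) unfolding S_def dual_invariant_def dual_space_def by simp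
  then have "w g \<in> pure_power_ideal ?e S"
    using in_pure_power_ideal_if_diagonal_fixed[OF _ lookup_dual_act_component fixed]
      generator_eigenvalue_ne_1[OF assms(1-3) S_def \<open>S \<noteq> {}\<close>] by blast
  then show ?thesis
    unfolding S_def[symmetric] using milnor_eq_fpq_iff \<open>S \<subseteq> {..<2}\<close> assms(1,2) by simp
qed

theorem mainTheorem11:
  fixes p q :: nat
  assumes "2 \<le> p" and "2 \<le> q" and "coprime p q"
  shows
    "let G = {..<p * q}; nu = nupq p q; jinv = jinvpq p q; F = fpq p q;
         sg = (\<lambda>_::nat. 0::nat); qw = qwpq p q;
         I = {i. i < p * q \<and> \<not> int p dvd (int i - 1) \<and> \<not> int q dvd (int i - 1)};
         B = {(a, b). a \<le> p - 2 \<and> b \<le> q - 2}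
     in card I = (p - 1) * (q - 1)
      \<and> (\<forall>i\<in>I. dual_invariant 2 nu sg jinv G F (dual_unit i))
      \<and> (\<forall>c. dual_equiv 2 nu jinv G F (\<lambda>g. \<Sum>i\<in>I. const (c i) * dual_unit i g) (\<lambda>_. 0)
              \<longrightarrow> (\<forall>i\<in>I. c i = 0))
      \<and> (\<forall>w. dual_invariant 2 nu sg jinv G F w
              \<longrightarrow> (\<exists>c. dual_equiv 2 nu jinv G F w (\<lambda>g. \<Sum>i\<in>I. const (c i) * dual_unit i g)))
      \<and> (\<forall>c. milnor_eq {..<2} F (\<Sum>(a, b)\<in>B. const (c (a, b)) * mon a b) 0
              \<longrightarrow> (\<forall>ab\<in>B. c ab = 0))
      \<and> (\<forall>x\<in>polys_in {..<2}. \<exists>c. milnor_eq {..<2} F x (\<Sum>(a, b)\<in>B. const (c (a, b)) * mon a b))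
      \<and> bij_betw (\<lambda>i. (p - rep2 p i, q - rep2 q i)) I B
      \<and> (\<forall>i\<in>I. dual_bideg 2 qw nu jinv 0 i =
                 (- wdeg qw (monexp (p - rep2 p i) (q - rep2 q i)),
                  wdeg qw (monexp (p - rep2 p i) (q - rep2 q i))))"
proof -
  have I_eq: "{i. i < p * q \<and> \<not> int p dvd (int i - 1) \<and> \<not> int q dvd (int i - 1)} = narrow_sectors p q"
    using int_dvd_diff_one_iff assms(1,2) by (auto simp: narrow_sectors_def)
  have sectors: "finite (narrow_sectors p q)" "narrow_sectors p q \<subseteq> {..<p * q}"
    by (auto simp: narrow_sectors_def)
  have narrow_iff: "\<forall>g\<in>{..<p * q}. fixset 2 (nupq p q) (jinvpq p q g) = {} \<longleftrightarrow> g \<in> narrow_sectors p q"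
    using fixset_jinvpq_eq_empty_iff[OF assms(1,2)] by simp
  show ?thesis
    unfolding Let_def I_eq
    apply (intro conjI ballI allI impI)
    subgoal by (rule card_narrow_sectors[OF assms])
    subgoal for i using narrow_iff sectors by (intro dual_invariant_dual_unit) auto
    subgoal for c i
      using dual_units_independent[OF sectors, of 2 "nupq p q" "jinvpq p q" _ c i] narrow_iff sectors(2)
      by auto
    subgoal for w
      using dual_invariant_in_span_dual_units[OF sectors narrow_iff] broad_sector_vanishes[OF assms]
      by (simp add: dual_invariant_def)
    subgoal for c ab by (rule milnor_fpq_monomials_independent[OF assms(1,2)])
    subgoal for x by (rule milnor_fpq_monomials_span[OF assms(1,2)])
    subgoal by (rule bij_betw_narrow_sectors[OF assms])
    subgoal for i by (rule dual_bideg_narrow[OF assms(1,2)])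
    done
qed

end
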